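(* Let $G_1,\dots,G_n$ be finite groups and let $K$ be a simplicial complex on $[n]$ whose 1-skeleton $K^1$ is a chordal graph. Then the image of the faithful representation $\Theta_K:\prod_{K^1}G_i\to\mathrm{Aut}(F_{\rho_K})$ is not contained in the subgroup $\mathrm{IA}_{\rho_K}$.
   Context: $\prod_{K^1}G_i$ is the graph product: the quotient of $G_1*\cdots*G_n$ by the normal closure of $[g_i,g_j]$ for $g_i\in G_i,g_j\in G_j$, $\{i,j\}$ an edge of $K^1$. $F_{\rho_K}$ is the kernel of the natural projection $\prod_{K^1}G_i\to G_1\times\cdots\times G_n$, free of rank $\rho_K$ when $K^1$ is chordal, and $\Theta_K(g)(h)=ghg^{-1}$. $\mathrm{IA}_N$ is the kernel of the map $\mathrm{Aut}(F_N)\to\mathrm{GL}(N,\mathbb Z)$ induced by the action on $H_1(F_N)=\mathbb Z^N$. A graph is chordal if every cycle of length greater than three has an edge joining two nonconsecutive vertices. *)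

theory Defs
  imports "HOL-Algebra.Algebra"
begin

definition simplicial_complex :: "nat \<Rightarrow> nat set set \<Rightarrow> bool" where
  "simplicial_complex n K \<longleftrightarrow>
     (\<forall>\<sigma>\<in>K. \<sigma> \<subseteq> {1..n}) \<and>
     (\<forall>\<sigma>\<in>K. \<forall>\<tau>. \<tau> \<subseteq> \<sigma> \<longrightarrow> \<tau> \<in> K) \<and>
     (\<forall>i\<in>{1..n}. {i} \<in> K)"

definition skel_edge :: "nat set set \<Rightarrow> nat \<Rightarrow> nat \<Rightarrow> bool" where
  "skel_edge K i j \<longleftrightarrow> i \<noteq> j \<and> {i, j} \<in> K"

definition chordal :: "nat \<Rightarrow> (nat \<Rightarrow> nat \<Rightarrow> bool) \<Rightarrow> bool" where
  "chordal n E \<longleftrightarrow>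
     (\<forall>vs. length vs > 3 \<and> distinct vs \<and> set vs \<subseteq> {1..n} \<and>
        (\<forall>i<length vs. E (vs ! i) (vs ! ((i + 1) mod length vs))) \<longrightarrow>
        (\<exists>i<length vs. \<exists>j<length vs. i \<noteq> j \<and>
            j \<noteq> (i + 1) mod length vs \<and> i \<noteq> (j + 1) mod length vs \<and>
            E (vs ! i) (vs ! j)))"

definition gp_words :: "nat \<Rightarrow> (nat \<Rightarrow> 'a monoid) \<Rightarrow> (nat \<times> 'a) list set" where
  "gp_words n G = {w. \<forall>(i, x)\<in>set w. i \<in> {1..n} \<and> x \<in> carrier (G i)}"

text \<open>The congruence on words defining the graph product: generated by
  multiplying adjacent letters from the same factor, deleting identity letters
  (these two give the free product), and commuting adjacent letters from factors
  joined by an edge (the relations [g_i, g_j] = 1).\<close>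
inductive gp_eq :: "nat \<Rightarrow> (nat \<Rightarrow> 'a monoid) \<Rightarrow> (nat \<Rightarrow> nat \<Rightarrow> bool)
                     \<Rightarrow> (nat \<times> 'a) list \<Rightarrow> (nat \<times> 'a) list \<Rightarrow> bool"
  for n G E where
  gp_refl: "w \<in> gp_words n G \<Longrightarrow> gp_eq n G E w w"
| gp_sym: "gp_eq n G E u v \<Longrightarrow> gp_eq n G E v u"
| gp_trans: "gp_eq n G E u v \<Longrightarrow> gp_eq n G E v w \<Longrightarrow> gp_eq n G E u w"
| gp_mult: "u \<in> gp_words n G \<Longrightarrow> v \<in> gp_words n G \<Longrightarrow> i \<in> {1..n} \<Longrightarrow>
     x \<in> carrier (G i) \<Longrightarrow> y \<in> carrier (G i) \<Longrightarrow>
     gp_eq n G E (u @ [(i, x), (i, y)] @ v) (u @ [(i, x \<otimes>\<^bsub>G i\<^esub> y)] @ v)"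
| gp_one: "u \<in> gp_words n G \<Longrightarrow> v \<in> gp_words n G \<Longrightarrow> i \<in> {1..n} \<Longrightarrow>
     gp_eq n G E (u @ [(i, \<one>\<^bsub>G i\<^esub>)] @ v) (u @ v)"
| gp_comm: "u \<in> gp_words n G \<Longrightarrow> v \<in> gp_words n G \<Longrightarrow> i \<in> {1..n} \<Longrightarrow> j \<in> {1..n} \<Longrightarrow>
     E i j \<Longrightarrow> x \<in> carrier (G i) \<Longrightarrow> y \<in> carrier (G j) \<Longrightarrow>
     gp_eq n G E (u @ [(i, x), (j, y)] @ v) (u @ [(j, y), (i, x)] @ v)"

definition gp_classes ::
  "nat \<Rightarrow> (nat \<Rightarrow> 'a monoid) \<Rightarrow> (nat \<Rightarrow> nat \<Rightarrow> bool) \<Rightarrow> (nat \<times> 'a) list set set" where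
  "gp_classes n G E = (\<lambda>u. {w. gp_eq n G E u w}) ` gp_words n G"

definition graph_product ::
  "nat \<Rightarrow> (nat \<Rightarrow> 'a monoid) \<Rightarrow> (nat \<Rightarrow> nat \<Rightarrow> bool) \<Rightarrow> (nat \<times> 'a) list set monoid" where
  "graph_product n G E =
     \<lparr> carrier = gp_classes n G E,
       monoid.mult = (\<lambda>A B. {w. \<exists>u\<in>A. \<exists>v\<in>B. gp_eq n G E (u @ v) w}),
       monoid.one = {w. gp_eq n G E [] w} \<rparr>"

text \<open>The i-th coordinate of the natural projection to G_1 x ... x G_n:
  the product (in order) of the letters of the word lying in G_i.\<close>
definition gp_coord :: "(nat \<Rightarrow> 'a monoid) \<Rightarrow> nat \<Rightarrow> (nat \<times> 'a) list \<Rightarrow> 'a" where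
  "gp_coord G i w = foldr (\<lambda>(j, x) acc. if j = i then x \<otimes>\<^bsub>G i\<^esub> acc else acc) w \<one>\<^bsub>G i\<^esub>"

text \<open>F_{rho_K}: the kernel of the natural projection onto the direct product.\<close>
definition gp_kernel ::
  "nat \<Rightarrow> (nat \<Rightarrow> 'a monoid) \<Rightarrow> (nat \<Rightarrow> nat \<Rightarrow> bool) \<Rightarrow> (nat \<times> 'a) list set set" where
  "gp_kernel n G E =
     {A \<in> carrier (graph_product n G E). \<forall>w\<in>A. \<forall>i\<in>{1..n}. gp_coord G i w = \<one>\<^bsub>G i\<^esub>}"

definition Theta ::
  "nat \<Rightarrow> (nat \<Rightarrow> 'a monoid) \<Rightarrow> (nat \<Rightarrow> nat \<Rightarrow> bool) \<Rightarrow> (nat \<times> 'a) list set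
     \<Rightarrow> (nat \<times> 'a) list set \<Rightarrow> (nat \<times> 'a) list set" where
  "Theta n G E g h = g \<otimes>\<^bsub>graph_product n G E\<^esub> h \<otimes>\<^bsub>graph_product n G E\<^esub>
                       inv\<^bsub>graph_product n G E\<^esub> g"

text \<open>An automorphism phi of the free group F lies in IA iff it induces the
  identity on H_1(F) = F/[F,F], i.e. phi(h) h^{-1} lies in the commutator
  subgroup [F,F] for every h in F.\<close>
definition in_IA :: "('b, 'c) monoid_scheme \<Rightarrow> 'b set \<Rightarrow> ('b \<Rightarrow> 'b) \<Rightarrow> bool" where
  "in_IA \<Gamma> F \<phi> \<longleftrightarrow> (\<forall>h\<in>F. \<phi> h \<otimes>\<^bsub>\<Gamma>\<^esub> inv\<^bsub>\<Gamma>\<^esub> h \<in> derived \<Gamma> F)"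

end

theory Submission
  imports Defs
begin

text \<open>Suppose first that two vertices i, j are not adjacent, and pick x \<noteq> 1 in G_i and y \<noteq> 1
  in G_j. Read a word as a walk in G_i \<times> G_j and count, at every point, the G_i-steps arriving
  minus those leaving. As no relation moves a G_i-letter past a G_j-letter, this flux is
  an invariant of the group element; it is additive on the kernel F (whose elements are closed
  walks), so it vanishes on [F, F]. For the commutator h = [x, y] \<in> F, however,
  x h x\<inverse> h\<inverse> has nonzero flux, so conjugation by x does not act trivially on H_1(F).
  If instead K^1 is complete, conjugation by any element of G_1 is trivial on F, which
  contradicts faithfulness.\<close>

locale graph_product_data =
  fixes n :: nat and G :: "nat \<Rightarrow> 'a monoid" and E :: "nat \<Rightarrow> nat \<Rightarrow> bool"
  assumes factor_group: "\<And>i. i \<in> {1..n} \<Longrightarrow> group (G i)"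
    and edge_irrefl: "\<And>i j. E i j \<Longrightarrow> i \<noteq> j"
begin

abbreviation "W \<equiv> gp_words n G"
abbreviation "geq \<equiv> gp_eq n G E"
abbreviation "\<Gamma> \<equiv> graph_product n G E"

lemma factor_monoid: "i \<in> {1..n} \<Longrightarrow> monoid (G i)"
  using factor_group group.is_monoid by blast

lemma factor_one_closed [simp]: "i \<in> {1..n} \<Longrightarrow> \<one>\<^bsub>G i\<^esub> \<in> carrier (G i)"
  by (simp add: monoid.one_closed[OF factor_monoid])

lemma gp_words_Nil [simp]: "[] \<in> W"
  by (simp add: gp_words_def)

lemma gp_words_Cons [simp]: "(i, x) # w \<in> W \<longleftrightarrow> i \<in> {1..n} \<and> x \<in> carrier (G i) \<and> w \<in> W"
  by (auto simp: gp_words_def)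

lemma gp_words_append [simp]: "u @ v \<in> W \<longleftrightarrow> u \<in> W \<and> v \<in> W"
  by (auto simp: gp_words_def)

lemma gp_words_filter: "w \<in> W \<Longrightarrow> filter P w \<in> W"
  by (auto simp: gp_words_def)

lemma gp_eq_words: "geq u v \<Longrightarrow> u \<in> W \<and> v \<in> W"
  by (induction rule: gp_eq.induct) (auto simp: monoid.m_closed[OF factor_monoid])

lemma gp_eq_context: "geq u v \<Longrightarrow> p \<in> W \<Longrightarrow> s \<in> W \<Longrightarrow> geq (p @ u @ s) (p @ v @ s)"
proof (induction rule: gp_eq.induct)
  case (gp_refl w)
  then show ?case by (simp add: gp_eq.gp_refl)
next
  case (gp_sym u v)
  then show ?case by (simp add: gp_eq.gp_sym)
next
  case (gp_trans u v w)
  then show ?case by (meson gp_eq.gp_trans)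
next
  case (gp_mult u v i x y)
  then show ?case using gp_eq.gp_mult[of "p @ u" n G "v @ s" i x y E] by simp
next
  case (gp_one u v i)
  then show ?case using gp_eq.gp_one[of "p @ u" n G "v @ s" i E] by simp
next
  case (gp_comm u v i j x y)
  then show ?case using gp_eq.gp_comm[of "p @ u" n G "v @ s" i j E x y] by simp
qed

lemma gp_eq_append: "geq u u' \<Longrightarrow> geq v v' \<Longrightarrow> geq (u @ v) (u' @ v')"
  using gp_eq_context[of u u' "[]" v] gp_eq_context[of v v' u' "[]"] gp_eq_words
  by (auto intro: gp_eq.gp_trans)

definition cls :: "(nat \<times> 'a) list \<Rightarrow> (nat \<times> 'a) list set" where
  "cls u = {w. geq u w}"

lemma mem_cls: "w \<in> cls u \<longleftrightarrow> geq u w"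
  by (simp add: cls_def)

lemma cls_eq_iff: "u \<in> W \<Longrightarrow> v \<in> W \<Longrightarrow> cls u = cls v \<longleftrightarrow> geq u v"
  unfolding cls_def using gp_eq.gp_refl gp_eq.gp_sym gp_eq.gp_trans by blast

lemma carrier_graph_product: "carrier \<Gamma> = cls ` W"
  by (simp add: graph_product_def gp_classes_def cls_def)

lemma mult_cls: "u \<in> W \<Longrightarrow> v \<in> W \<Longrightarrow> cls u \<otimes>\<^bsub>\<Gamma>\<^esub> cls v = cls (u @ v)"
  unfolding graph_product_def cls_def
  using gp_eq_append gp_eq.gp_refl gp_eq.gp_trans by auto blast+

lemma one_cls: "\<one>\<^bsub>\<Gamma>\<^esub> = cls []"
  by (simp add: graph_product_def cls_def)

definition inv_word :: "(nat \<times> 'a) list \<Rightarrow> (nat \<times> 'a) list" where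
  "inv_word w = rev (map (\<lambda>(i, x). (i, inv\<^bsub>G i\<^esub> x)) w)"

lemma inv_word_Nil [simp]: "inv_word [] = []"
  by (simp add: inv_word_def)

lemma inv_word_Cons [simp]: "inv_word ((i, x) # w) = inv_word w @ [(i, inv\<^bsub>G i\<^esub> x)]"
  by (simp add: inv_word_def)

lemma inv_word_append [simp]: "inv_word (u @ v) = inv_word v @ inv_word u"
  by (simp add: inv_word_def)

lemma inv_word_words: "w \<in> W \<Longrightarrow> inv_word w \<in> W"
  by (induction w) (auto simp: group.inv_closed[OF factor_group])

lemma inv_word_inv_word: "w \<in> W \<Longrightarrow> inv_word (inv_word w) = w"
  by (induction w) (auto simp: group.inv_inv[OF factor_group])

lemma gp_eq_letter_inv: 
  assumes "i \<in> {1..n}" "x \<in> carrier (G i)"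
  shows "geq [(i, x), (i, inv\<^bsub>G i\<^esub> x)] []"
proof -
  have "geq ([] @ [(i, x), (i, inv\<^bsub>G i\<^esub> x)] @ []) ([] @ [(i, x \<otimes>\<^bsub>G i\<^esub> inv\<^bsub>G i\<^esub> x)] @ [])"
    using assms by (intro gp_eq.gp_mult) (auto simp: factor_group)
  moreover have "geq ([] @ [(i, \<one>\<^bsub>G i\<^esub>)] @ []) ([] @ [])"
    using assms by (intro gp_eq.gp_one) auto
  ultimately show ?thesis
    using assms by (auto simp: group.r_inv[OF factor_group] intro: gp_eq.gp_trans)
qed

lemma gp_eq_word_inv_word: "w \<in> W \<Longrightarrow> geq (w @ inv_word w) []"
proof (induction w)
  case Nil
  then show ?case by (simp add: gp_eq.gp_refl)
next
  case (Cons a w)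
  obtain i x where a: "a = (i, x)" by fastforce
  with Cons.prems have ix: "i \<in> {1..n}" "x \<in> carrier (G i)" and w: "w \<in> W" by auto
  then have "inv\<^bsub>G i\<^esub> x \<in> carrier (G i)" by (simp add: factor_group)
  then have "geq ([(i, x)] @ (w @ inv_word w) @ [(i, inv\<^bsub>G i\<^esub> x)]) [(i, x), (i, inv\<^bsub>G i\<^esub> x)]"
    using gp_eq_context[OF Cons.IH[OF w], of "[(i, x)]" "[(i, inv\<^bsub>G i\<^esub> x)]"] ix by simp
  then show ?case using gp_eq_letter_inv[OF ix] a by (auto intro: gp_eq.gp_trans)
qed

lemma gp_eq_inv_word_word: "w \<in> W \<Longrightarrow> geq (inv_word w @ w) []"
  using gp_eq_word_inv_word[OF inv_word_words] inv_word_inv_word by metis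

lemma group_graph_product: "group \<Gamma>"
proof (rule groupI)
  fix a assume "a \<in> carrier \<Gamma>"
  then obtain w where w: "w \<in> W" "a = cls w" by (auto simp: carrier_graph_product)
  then have "cls (inv_word w) \<otimes>\<^bsub>\<Gamma>\<^esub> a = \<one>\<^bsub>\<Gamma>\<^esub>"
    using gp_eq_inv_word_word inv_word_words by (simp add: mult_cls one_cls cls_eq_iff)
  then show "\<exists>y\<in>carrier \<Gamma>. y \<otimes>\<^bsub>\<Gamma>\<^esub> a = \<one>\<^bsub>\<Gamma>\<^esub>"
    using inv_word_words[OF w(1)] by (auto simp: carrier_graph_product)
qed (auto simp: carrier_graph_product mult_cls one_cls)

lemma inv_cls: "w \<in> W \<Longrightarrow> inv\<^bsub>\<Gamma>\<^esub> (cls w) = cls (inv_word w)"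
  by (rule group.inv_equality[OF group_graph_product])
    (auto simp: mult_cls one_cls cls_eq_iff carrier_graph_product gp_eq_inv_word_word inv_word_words)

lemma gp_coord_Nil [simp]: "gp_coord G c [] = \<one>\<^bsub>G c\<^esub>"
  by (simp add: gp_coord_def)

lemma gp_coord_Cons [simp]:
  "gp_coord G c ((k, z) # w) = (if k = c then z \<otimes>\<^bsub>G c\<^esub> gp_coord G c w else gp_coord G c w)"
  by (simp add: gp_coord_def)

lemma gp_coord_closed: "c \<in> {1..n} \<Longrightarrow> w \<in> W \<Longrightarrow> gp_coord G c w \<in> carrier (G c)"
  by (induction w) (auto simp: monoid.m_closed[OF factor_monoid])

lemma gp_coord_append:
  "c \<in> {1..n} \<Longrightarrow> u \<in> W \<Longrightarrow> v \<in> W \<Longrightarrow>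
   gp_coord G c (u @ v) = gp_coord G c u \<otimes>\<^bsub>G c\<^esub> gp_coord G c v"
  by (induction u)
    (auto simp: gp_coord_closed monoid.l_one[OF factor_monoid] monoid.m_assoc[OF factor_monoid])

lemma gp_coord_gp_eq: "geq u v \<Longrightarrow> c \<in> {1..n} \<Longrightarrow> gp_coord G c u = gp_coord G c v"
proof (induction rule: gp_eq.induct)
  case (gp_mult u v i x y)
  then show ?case
    by (auto simp: gp_coord_append gp_coord_closed monoid.m_closed[OF factor_monoid]
        monoid.m_assoc[OF factor_monoid])
next
  case (gp_one u v i)
  then show ?case
    by (auto simp: gp_coord_append gp_coord_closed monoid.l_one[OF factor_monoid])
next
  case (gp_comm u v i j x y)
  then have "i \<noteq> j" using edge_irrefl by blast
  with gp_comm show ?case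
    by (auto simp: gp_coord_append gp_coord_closed monoid.l_one[OF factor_monoid]
        monoid.r_one[OF factor_monoid])
qed auto

lemma cls_letter_ne_one:
  assumes "c \<in> {1..n}" "a \<in> carrier (G c)" "a \<noteq> \<one>\<^bsub>G c\<^esub>"
  shows "cls [(c, a)] \<noteq> \<one>\<^bsub>\<Gamma>\<^esub>"
proof
  assume "cls [(c, a)] = \<one>\<^bsub>\<Gamma>\<^esub>"
  then have "geq [(c, a)] []" using assms by (simp add: one_cls cls_eq_iff)
  then have "gp_coord G c [(c, a)] = gp_coord G c []" using gp_coord_gp_eq assms(1) by blast
  then show False using assms by (simp add: monoid.r_one[OF factor_monoid])
qed

lemma gp_eq_collect_cone_letters:
  assumes c: "c \<in> {1..n}" and cone: "\<And>k. k \<in> {1..n} \<Longrightarrow> k \<noteq> c \<Longrightarrow> E c k"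
  shows "w \<in> W \<Longrightarrow> geq w ((c, gp_coord G c w) # filter (\<lambda>l. fst l \<noteq> c) w)"
proof (induction w)
  case Nil
  have "geq ([] @ [(c, \<one>\<^bsub>G c\<^esub>)] @ []) ([] @ [])" using c by (intro gp_eq.gp_one) auto
  then show ?case by (simp add: gp_eq.gp_sym)
next
  case (Cons a w)
  obtain k z where a: "a = (k, z)" by fastforce
  with Cons.prems have k: "k \<in> {1..n}" "z \<in> carrier (G k)" and w: "w \<in> W" by auto
  let ?x = "gp_coord G c w" and ?r = "filter (\<lambda>l. fst l \<noteq> c) w"
  have x: "?x \<in> carrier (G c)" and r: "?r \<in> W"
    using gp_coord_closed[OF c w] gp_words_filter[OF w] .
  have IH: "geq ((k, z) # w) ((k, z) # (c, ?x) # ?r)"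
    using gp_eq_context[OF Cons.IH[OF w], of "[(k, z)]" "[]"] k by simp
  show ?case
  proof (cases "k = c")
    case True
    have "geq ([] @ [(c, z), (c, ?x)] @ ?r) ([] @ [(c, z \<otimes>\<^bsub>G c\<^esub> ?x)] @ ?r)"
      using k x r True by (intro gp_eq.gp_mult) auto
    with IH True a show ?thesis by (auto intro: gp_eq.gp_trans)
  next
    case False
    have "geq ([] @ [(c, ?x), (k, z)] @ ?r) ([] @ [(k, z), (c, ?x)] @ ?r)"
      using k x r c False cone by (intro gp_eq.gp_comm) auto
    with IH False a show ?thesis by (auto intro: gp_eq.gp_trans gp_eq.gp_sym)
  qed
qed

lemma gp_eq_cone_letter_commute:
  assumes c: "c \<in> {1..n}" and cone: "\<And>k. k \<in> {1..n} \<Longrightarrow> k \<noteq> c \<Longrightarrow> E c k"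
    and a: "a \<in> carrier (G c)"
  shows "r \<in> W \<Longrightarrow> \<forall>l\<in>set r. fst l \<noteq> c \<Longrightarrow> geq ((c, a) # r) (r @ [(c, a)])"
proof (induction r)
  case Nil
  then show ?case using c a by (simp add: gp_eq.gp_refl)
next
  case (Cons b r)
  obtain k z where b: "b = (k, z)" by fastforce
  with Cons.prems have k: "k \<in> {1..n}" "z \<in> carrier (G k)" "k \<noteq> c" and r: "r \<in> W" by auto
  have "geq ([] @ [(c, a), (k, z)] @ r) ([] @ [(k, z), (c, a)] @ r)"
    using k r a c cone by (intro gp_eq.gp_comm) auto
  moreover have "geq ((c, a) # r) (r @ [(c, a)])" using Cons r b by simp
  then have "geq ([(k, z)] @ ((c, a) # r) @ []) ([(k, z)] @ (r @ [(c, a)]) @ [])"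
    using k by (intro gp_eq_context) auto
  ultimately show ?case using b by (auto intro: gp_eq.gp_trans)
qed

text \<open>If the vertex c is joined to every other vertex, a kernel element is equivalent to a word
  avoiding c (its G_c letters can be collected in front, where they multiply to 1), and G_c
  commutes with such words.\<close>
lemma cone_letter_centralizes_kernel:
  assumes c: "c \<in> {1..n}" and cone: "\<And>k. k \<in> {1..n} \<Longrightarrow> k \<noteq> c \<Longrightarrow> E c k"
    and a: "a \<in> carrier (G c)" and h: "h \<in> gp_kernel n G E"
  shows "Theta n G E (cls [(c, a)]) h = h"
proof -
  interpret \<Gamma>: group \<Gamma> by (rule group_graph_product)
  obtain w where w: "w \<in> W" "h = cls w" using h by (auto simp: gp_kernel_def carrier_graph_product)
  then have "w \<in> h" by (simp add: mem_cls gp_eq.gp_refl)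
  then have "gp_coord G c w = \<one>\<^bsub>G c\<^esub>" using h c by (auto simp: gp_kernel_def)
  let ?r = "filter (\<lambda>l. fst l \<noteq> c) w"
  have r: "?r \<in> W" using gp_words_filter[OF w(1)] .
  have "geq ([] @ [(c, \<one>\<^bsub>G c\<^esub>)] @ ?r) ([] @ ?r)" using r c by (intro gp_eq.gp_one) auto
  then have "geq w ?r"
    using gp_eq_collect_cone_letters[OF c cone w(1)] \<open>gp_coord G c w = \<one>\<^bsub>G c\<^esub>\<close>
    by (auto intro: gp_eq.gp_trans)
  then have h_r: "h = cls ?r" using w r by (simp add: cls_eq_iff)
  have commute: "cls [(c, a)] \<otimes>\<^bsub>\<Gamma>\<^esub> h = h \<otimes>\<^bsub>\<Gamma>\<^esub> cls [(c, a)]"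
    using gp_eq_cone_letter_commute[OF c cone a r] h_r r c a by (simp add: mult_cls cls_eq_iff)
  have "cls [(c, a)] \<in> carrier \<Gamma>" "h \<in> carrier \<Gamma>"
    using c a h_r r by (auto simp: carrier_graph_product)
  then show ?thesis
    by (simp add: Theta_def commute \<Gamma>.m_assoc)
qed

end

locale nonadjacent_pair = graph_product_data +
  fixes i j :: nat
  assumes i: "i \<in> {1..n}" and j: "j \<in> {1..n}" and distinct: "i \<noteq> j"
    and not_edge: "\<not> E i j" "\<not> E j i"
begin

abbreviation "C \<equiv> carrier (G i) \<times> carrier (G j)"
abbreviation "origin \<equiv> (\<one>\<^bsub>G i\<^esub>, \<one>\<^bsub>G j\<^esub>)"

definition walk_step :: "'a \<times> 'a \<Rightarrow> nat \<times> 'a \<Rightarrow> 'a \<times> 'a" where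
  "walk_step s l =
     (if fst l = i then fst s \<otimes>\<^bsub>G i\<^esub> snd l else fst s,
      if fst l = j then snd s \<otimes>\<^bsub>G j\<^esub> snd l else snd s)"

abbreviation "walk_end \<equiv> foldl walk_step"

fun flux :: "'a \<times> 'a \<Rightarrow> (nat \<times> 'a) list \<Rightarrow> 'a \<times> 'a \<Rightarrow> int" where
  "flux s [] = (\<lambda>_. 0)"
| "flux s (l # w) = (\<lambda>t.
     (if fst l = i then of_bool (t = walk_step s l) - of_bool (t = s) else 0)
     + flux (walk_step s l) w t)"

sublocale Gi: group "G i" using factor_group i by blast
sublocale Gj: group "G j" using factor_group j by blast

lemma origin_in_C: "origin \<in> C"
  using i j by simp

lemma walk_end_eq_coords:
  "s \<in> C \<Longrightarrow> w \<in> W \<Longrightarrow>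
   walk_end s w = (fst s \<otimes>\<^bsub>G i\<^esub> gp_coord G i w, snd s \<otimes>\<^bsub>G j\<^esub> gp_coord G j w)"
proof (induction w arbitrary: s)
  case Nil
  then show ?case by auto
next
  case (Cons l w)
  obtain k z where l: "l = (k, z)" by fastforce
  have "walk_step s l \<in> C"
    using Cons.prems l by (auto simp: walk_step_def)
  with Cons l distinct show ?case
    by (auto simp: walk_step_def gp_coord_closed i j Gi.m_assoc Gj.m_assoc)
qed

lemma walk_end_closed: "s \<in> C \<Longrightarrow> w \<in> W \<Longrightarrow> walk_end s w \<in> C"
  by (auto simp: walk_end_eq_coords gp_coord_closed[OF i] gp_coord_closed[OF j])

lemma walk_end_gp_eq: "geq u v \<Longrightarrow> s \<in> C \<Longrightarrow> walk_end s u = walk_end s v"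
  using gp_eq_words gp_coord_gp_eq i j by (simp add: walk_end_eq_coords)

lemma flux_append: "flux s (u @ v) = (\<lambda>t. flux s u t + flux (walk_end s u) v t)"
  by (induction u arbitrary: s) auto

lemma flux_replace:
  assumes "s \<in> C" "u \<in> W" "geq a b" and local: "\<And>s. s \<in> C \<Longrightarrow> flux s a = flux s b"
  shows "flux s (u @ a @ v) = flux s (u @ b @ v)"
proof -
  have "walk_end s u \<in> C" using assms walk_end_closed by blast
  then show ?thesis using local walk_end_gp_eq[OF \<open>geq a b\<close>] by (simp add: flux_append)
qed

lemma flux_gp_eq: "geq u v \<Longrightarrow> s \<in> C \<Longrightarrow> flux s u = flux s v"
proof (induction arbitrary: s rule: gp_eq.induct)
  case (gp_mult u v k x y)
  show ?case
  proof (rule flux_replace)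
    show "geq [(k, x), (k, y)] [(k, x \<otimes>\<^bsub>G k\<^esub> y)]"
      using gp_eq.gp_mult[of "[]" n G "[]" k x y E] gp_mult by simp
    show "flux s' [(k, x), (k, y)] = flux s' [(k, x \<otimes>\<^bsub>G k\<^esub> y)]" if "s' \<in> C" for s'
      using that gp_mult distinct by (auto simp: walk_step_def fun_eq_iff Gi.m_assoc)
  qed (use gp_mult in auto)
next
  case (gp_one u v k)
  show ?case
  proof (rule flux_replace[where b = "[]", simplified])
    show "geq [(k, \<one>\<^bsub>G k\<^esub>)] []"
      using gp_eq.gp_one[of "[]" n G "[]" k E] gp_one by simp
    show "flux s' [(k, \<one>\<^bsub>G k\<^esub>)] = (\<lambda>_. 0)" if "s' \<in> C" for s'
      using that by (auto simp: walk_step_def fun_eq_iff)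
  qed (use gp_one in auto)
next
  case (gp_comm u v k l x y)
  have "k \<noteq> l" "\<not> (k = i \<and> l = j)" "\<not> (k = j \<and> l = i)"
    using edge_irrefl not_edge gp_comm.hyps(5) by auto
  show ?case
  proof (rule flux_replace)
    show "geq [(k, x), (l, y)] [(l, y), (k, x)]"
      using gp_eq.gp_comm[of "[]" n G "[]" k l E x y] gp_comm by simp
    show "flux s' [(k, x), (l, y)] = flux s' [(l, y), (k, x)]" if "s' \<in> C" for s'
      using that \<open>k \<noteq> l\<close> \<open>\<not> (k = i \<and> l = j)\<close> \<open>\<not> (k = j \<and> l = i)\<close>
      by (auto simp: walk_step_def fun_eq_iff)
  qed (use gp_comm in auto)
qed auto

definition null_loop :: "(nat \<times> 'a) list \<Rightarrow> bool" where
  "null_loop w \<longleftrightarrow> w \<in> W \<and> walk_end origin w = origin \<and> flux origin w = (\<lambda>_. 0)"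

lemma null_loop_Nil: "null_loop []"
  by (simp add: null_loop_def)

lemma null_loop_append: "null_loop u \<Longrightarrow> null_loop v \<Longrightarrow> null_loop (u @ v)"
  by (simp add: null_loop_def flux_append)

lemma loop_inv_word:
  assumes w: "w \<in> W" and loop: "walk_end origin w = origin"
  shows "walk_end origin (inv_word w) = origin" "flux origin (inv_word w) = (\<lambda>t. - flux origin w t)"
proof -
  have e: "geq (w @ inv_word w) []" using gp_eq_word_inv_word[OF w] .
  show "walk_end origin (inv_word w) = origin"
    using walk_end_gp_eq[OF e origin_in_C] loop by simp
  show "flux origin (inv_word w) = (\<lambda>t. - flux origin w t)"
    using flux_gp_eq[OF e origin_in_C] loop by (simp add: flux_append fun_eq_iff add_eq_0_iff)
qed

lemma null_loop_inv_word: "null_loop w \<Longrightarrow> null_loop (inv_word w)"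
  using loop_inv_word inv_word_words by (simp add: null_loop_def)

lemma null_loop_commutator:
  assumes "u \<in> W" "v \<in> W" "walk_end origin u = origin" "walk_end origin v = origin"
  shows "null_loop (u @ v @ inv_word u @ inv_word v)"
  using assms loop_inv_word[of u] loop_inv_word[of v] inv_word_words
  by (simp add: null_loop_def flux_append)

lemma kernel_loop:
  assumes "h \<in> gp_kernel n G E"
  obtains w where "w \<in> W" "h = cls w" "walk_end origin w = origin"
proof -
  obtain w where w: "w \<in> W" "h = cls w"
    using assms by (auto simp: gp_kernel_def carrier_graph_product)
  then have "w \<in> h" by (simp add: mem_cls gp_eq.gp_refl)
  then have "gp_coord G i w = \<one>\<^bsub>G i\<^esub>" "gp_coord G j w = \<one>\<^bsub>G j\<^esub>"
    using assms i j by (auto simp: gp_kernel_def)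
  with w show thesis using that by (simp add: walk_end_eq_coords)
qed

lemma derived_kernel_null_loop:
  assumes "A \<in> derived \<Gamma> (gp_kernel n G E)"
  obtains w where "A = cls w" "null_loop w"
proof -
  have commutator: "\<exists>w. h1 \<otimes>\<^bsub>\<Gamma>\<^esub> h2 \<otimes>\<^bsub>\<Gamma>\<^esub> inv\<^bsub>\<Gamma>\<^esub> h1 \<otimes>\<^bsub>\<Gamma>\<^esub> inv\<^bsub>\<Gamma>\<^esub> h2 = cls w \<and> null_loop w"
    if h1: "h1 \<in> gp_kernel n G E" and h2: "h2 \<in> gp_kernel n G E" for h1 h2
  proof -
    obtain u where "u \<in> W" "h1 = cls u" "walk_end origin u = origin"
      using kernel_loop[OF h1] .
    moreover obtain v where "v \<in> W" "h2 = cls v" "walk_end origin v = origin"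
      using kernel_loop[OF h2] .
    ultimately show ?thesis
      using null_loop_commutator inv_word_words by (auto simp: inv_cls mult_cls)
  qed
  from assms have "\<exists>w. A = cls w \<and> null_loop w"
    unfolding derived_def
  proof (induction rule: generate.induct)
    case one
    then show ?case using null_loop_Nil one_cls by blast
  next
    case (incl h)
    then show ?case using commutator by blast
  next
    case (inv h)
    then obtain w where "h = cls w" "null_loop w" using commutator by blast
    then show ?case using inv_cls null_loop_inv_word by (auto simp: null_loop_def)
  next
    case (eng h1 h2)
    then obtain u v where "h1 = cls u" "null_loop u" "h2 = cls v" "null_loop v" by blast
    then show ?case using mult_cls null_loop_append by (auto simp: null_loop_def)
  qed
  then show thesis using that by blast
qed

text \<open>The walk of x h x\<inverse> h\<inverse> for h = [x, y] has flux -2 at (x, 1).\<close>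
lemma nonadjacent_letter_not_IA:
  assumes x: "x \<in> carrier (G i)" "x \<noteq> \<one>\<^bsub>G i\<^esub>" and y: "y \<in> carrier (G j)" "y \<noteq> \<one>\<^bsub>G j\<^esub>"
  shows "\<not> in_IA \<Gamma> (gp_kernel n G E) (Theta n G E (cls [(i, x)]))"
proof
  assume IA: "in_IA \<Gamma> (gp_kernel n G E) (Theta n G E (cls [(i, x)]))"
  define hw where "hw = [(i, x), (j, y), (i, inv\<^bsub>G i\<^esub> x), (j, inv\<^bsub>G j\<^esub> y)]"
  define zw where "zw = [(i, x)] @ hw @ [(i, inv\<^bsub>G i\<^esub> x)] @ inv_word hw"
  have hw: "hw \<in> W" and zw: "zw \<in> W"
    using i j x y inv_word_words by (simp_all add: hw_def zw_def)
  have "cls hw \<in> gp_kernel n G E"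
  proof -
    have "gp_coord G c hw = \<one>\<^bsub>G c\<^esub>" for c
      using x y distinct by (cases "c = i"; cases "c = j") (auto simp: hw_def)
    then have "gp_coord G c w = \<one>\<^bsub>G c\<^esub>" if "w \<in> cls hw" "c \<in> {1..n}" for w c
      using gp_coord_gp_eq[of hw w c] that by (simp add: mem_cls)
    then show ?thesis using hw by (auto simp: gp_kernel_def carrier_graph_product)
  qed
  moreover have "Theta n G E (cls [(i, x)]) (cls hw) \<otimes>\<^bsub>\<Gamma>\<^esub> inv\<^bsub>\<Gamma>\<^esub> (cls hw) = cls zw"
    using i x hw inv_word_words by (simp add: Theta_def inv_cls mult_cls zw_def)
  ultimately have "cls zw \<in> derived \<Gamma> (gp_kernel n G E)"
    using IA unfolding in_IA_def by metis
  then obtain w where "cls zw = cls w" "null_loop w" by (rule derived_kernel_null_loop)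
  then have "flux origin zw = (\<lambda>_. 0)"
    using zw flux_gp_eq origin_in_C by (simp add: cls_eq_iff null_loop_def)
  moreover have "x \<otimes>\<^bsub>G i\<^esub> x \<noteq> x" using x Gi.l_cancel_one by simp
  then have "flux origin zw (x, \<one>\<^bsub>G j\<^esub>) = -2"
    using x y distinct by (simp add: zw_def hw_def walk_step_def Gi.m_assoc)
  ultimately show False by simp
qed

end

theorem corollary5p5:
  fixes n :: nat and G :: "nat \<Rightarrow> 'a monoid" and K :: "nat set set"
  assumes n_pos: "1 \<le> n"
    and groups: "\<And>i. i \<in> {1..n} \<Longrightarrow> group (G i)"
    and finite: "\<And>i. i \<in> {1..n} \<Longrightarrow> finite (carrier (G i))"
    and nontrivial: "\<And>i. i \<in> {1..n} \<Longrightarrow> carrier (G i) \<noteq> {\<one>\<^bsub>G i\<^esub>}"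
    and complex: "simplicial_complex n K"
    and chordal: "chordal n (skel_edge K)"
    and faithful: "\<And>g. g \<in> carrier (graph_product n G (skel_edge K)) \<Longrightarrow>
        (\<forall>h\<in>gp_kernel n G (skel_edge K). Theta n G (skel_edge K) g h = h) \<Longrightarrow>
        g = \<one>\<^bsub>graph_product n G (skel_edge K)\<^esub>"
  shows "\<not> (\<forall>g\<in>carrier (graph_product n G (skel_edge K)).
             in_IA (graph_product n G (skel_edge K)) (gp_kernel n G (skel_edge K))
                   (Theta n G (skel_edge K) g))"
proof -
  interpret graph_product_data n G "skel_edge K"
    by (rule graph_product_data.intro) (auto simp: skel_edge_def groups)
  have nontrivial_elem: "\<exists>x\<in>carrier (G k). x \<noteq> \<one>\<^bsub>G k\<^esub>" if "k \<in> {1..n}" for k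
    using nontrivial[OF that] factor_one_closed[OF that] by blast
  show ?thesis
  proof (cases "\<exists>a\<in>{1..n}. \<exists>b\<in>{1..n}. a \<noteq> b \<and> \<not> skel_edge K a b")
    case True
    then obtain a b where ab: "a \<in> {1..n}" "b \<in> {1..n}" "a \<noteq> b" "\<not> skel_edge K a b" by blast
    then interpret nonadjacent_pair n G "skel_edge K" a b
      by unfold_locales (auto simp: skel_edge_def insert_commute)
    obtain x y where x: "x \<in> carrier (G a)" "x \<noteq> \<one>\<^bsub>G a\<^esub>"
      and y: "y \<in> carrier (G b)" "y \<noteq> \<one>\<^bsub>G b\<^esub>"
      using nontrivial_elem ab by meson
    have "cls [(a, x)] \<in> carrier \<Gamma>" using ab x by (simp add: carrier_graph_product)
    with nonadjacent_letter_not_IA[OF x y] show ?thesis by blast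
  next
    case False
    have one: "1 \<in> {1..n}" using n_pos by simp
    then obtain x where x: "x \<in> carrier (G 1)" "x \<noteq> \<one>\<^bsub>G 1\<^esub>" using nontrivial_elem by blast
    have cone: "skel_edge K 1 k" if "k \<in> {1..n}" "k \<noteq> 1" for k
      using False one that by metis
    have "cls [(1, x)] = \<one>\<^bsub>\<Gamma>\<^esub>"
    proof (rule faithful)
      show "cls [(1, x)] \<in> carrier \<Gamma>" using one x by (simp add: carrier_graph_product)
      show "\<forall>h\<in>gp_kernel n G (skel_edge K). Theta n G (skel_edge K) (cls [(1, x)]) h = h"
        using cone_letter_centralizes_kernel[OF one cone x(1)] by blast
    qed
    with one x show ?thesis using cls_letter_ne_one by blast
  qed
qed

end
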